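(* Let $\mathcal{A}$ be an alternative $W^{*}$-factor, $\mathcal{B}$ an alternative complex $\ast$-algebra, and $\Phi:\mathcal{A}\to\mathcal{B}$ a bijection preserving product $ab+ba^{*}$ (resp. $ab-ba^{*}$). Let $p_{1}\in\mathcal{A}$ be a projection with $p_{1}\neq 1_{\mathcal{A}}$, $p_{2}=1_{\mathcal{A}}-p_{1}$, and $\mathcal{A}_{ij}=p_{i}\mathcal{A}p_{j}$. Then $\Phi(b_{12}+c_{21})=\Phi(b_{12})+\Phi(c_{21})$ for all $b_{12}\in\mathcal{A}_{12}$, $c_{21}\in\mathcal{A}_{21}$.
   Context: An alternative $W^{*}$-factor is a prime alternative $C^{*}$-algebra (complete normed alternative complex $\ast$-algebra with $\|a^{*}a\|=\|a\|^{2}$) that is a dual Banach space; it is unital. A projection is a nonzero self-adjoint idempotent. $\mathcal{A}_{ij}$ are the Peirce components with respect to $p_{1}$. $\Phi$ preserves product $ab+ba^{*}$ (resp. $ab-ba^{*}$) if $\Phi(ab+ba^{*})=\Phi(a)\Phi(b)+\Phi(b)\Phi(a)^{*}$ (resp. $\Phi(ab-ba^{*})=\Phi(a)\Phi(b)-\Phi(b)\Phi(a)^{*}$) for all $a,b\in\mathcal{A}$. *)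

theory Defs
  imports "HOL-Analysis.Analysis"
begin

text \<open>Complex scalar multiplication is carried explicitly as a parameter smul,
 since the library has no complex-vector-space type class; the multiplication
 mul is a separate (not necessarily associative) operation.\<close>

definition complex_vs :: "(complex \<Rightarrow> 'a::ab_group_add \<Rightarrow> 'a) \<Rightarrow> bool" where
  "complex_vs smul \<longleftrightarrow>
     (\<forall>c x y. smul c (x + y) = smul c x + smul c y) \<and>
     (\<forall>c d x. smul (c + d) x = smul c x + smul d x) \<and>
     (\<forall>c d x. smul (c * d) x = smul c (smul d x)) \<and>
     (\<forall>x. smul 1 x = x)"

definition complex_normed_vs :: "(complex \<Rightarrow> 'a::real_normed_vector \<Rightarrow> 'a) \<Rightarrow> bool" where
  "complex_normed_vs smul \<longleftrightarrow>
     complex_vs smul \<and>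
     (\<forall>r x. smul (complex_of_real r) x = scaleR r x) \<and>
     (\<forall>c x. norm (smul c x) = cmod c * norm x)"

definition alt_star_alg ::
  "(complex \<Rightarrow> 'a::ab_group_add \<Rightarrow> 'a) \<Rightarrow> ('a \<Rightarrow> 'a \<Rightarrow> 'a) \<Rightarrow> ('a \<Rightarrow> 'a) \<Rightarrow> bool" where
  "alt_star_alg smul mul star \<longleftrightarrow>
     complex_vs smul \<and>
     (\<forall>x y z. mul (x + y) z = mul x z + mul y z) \<and>
     (\<forall>x y z. mul x (y + z) = mul x y + mul x z) \<and>
     (\<forall>c x y. mul (smul c x) y = smul c (mul x y)) \<and>
     (\<forall>c x y. mul x (smul c y) = smul c (mul x y)) \<and>
     (\<forall>x y. mul (mul x x) y = mul x (mul x y)) \<and>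
     (\<forall>x y. mul (mul y x) x = mul y (mul x x)) \<and>
     (\<forall>x y. star (x + y) = star x + star y) \<and>
     (\<forall>c x. star (smul c x) = smul (cnj c) (star x)) \<and>
     (\<forall>x. star (star x) = x) \<and>
     (\<forall>x y. star (mul x y) = mul (star y) (star x))"

definition alt_Cstar ::
  "(complex \<Rightarrow> 'a::banach \<Rightarrow> 'a) \<Rightarrow> ('a \<Rightarrow> 'a \<Rightarrow> 'a) \<Rightarrow> ('a \<Rightarrow> 'a) \<Rightarrow> bool" where
  "alt_Cstar smul mul star \<longleftrightarrow>
     alt_star_alg smul mul star \<and> complex_normed_vs smul \<and>
     (\<forall>x y. norm (mul x y) \<le> norm x * norm y) \<and>
     (\<forall>x. norm (mul (star x) x) = (norm x)\<^sup>2)"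

definition alg_ideal ::
  "(complex \<Rightarrow> 'a::ab_group_add \<Rightarrow> 'a) \<Rightarrow> ('a \<Rightarrow> 'a \<Rightarrow> 'a) \<Rightarrow> 'a set \<Rightarrow> bool" where
  "alg_ideal smul mul I \<longleftrightarrow>
     0 \<in> I \<and> (\<forall>x\<in>I. \<forall>y\<in>I. x + y \<in> I) \<and> (\<forall>c. \<forall>x\<in>I. smul c x \<in> I) \<and>
     (\<forall>a. \<forall>x\<in>I. mul a x \<in> I \<and> mul x a \<in> I)"

definition prime_alg ::
  "(complex \<Rightarrow> 'a::ab_group_add \<Rightarrow> 'a) \<Rightarrow> ('a \<Rightarrow> 'a \<Rightarrow> 'a) \<Rightarrow> bool" where
  "prime_alg smul mul \<longleftrightarrow>
     (\<forall>I J. alg_ideal smul mul I \<and> alg_ideal smul mul J \<and>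
            (\<forall>x\<in>I. \<forall>y\<in>J. mul x y = 0) \<longrightarrow> I = {0} \<or> J = {0})"

text \<open>The Banach space A (complex scalar multiplication smul) is (isometrically
 isomorphic to) the dual of the complex normed space X (scalar multiplication smulX):
 the complex dual of X is the set of bounded functionals X \<rightarrow> \<complex> that are complex-linear.\<close>
definition is_dual_of ::
  "(complex \<Rightarrow> 'x::real_normed_vector \<Rightarrow> 'x) \<Rightarrow> (complex \<Rightarrow> 'a::real_normed_vector \<Rightarrow> 'a) \<Rightarrow> bool" where
  "is_dual_of smulX smul \<longleftrightarrow> complex_normed_vs smulX \<and>
     (\<exists>T :: 'a \<Rightarrow> ('x \<Rightarrow>\<^sub>L complex).
        bij_betw T UNIV {f. \<forall>c x. blinfun_apply f (smulX c x) = c * blinfun_apply f x} \<and>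
        (\<forall>a b. T (a + b) = T a + T b) \<and>
        (\<forall>c a x. blinfun_apply (T (smul c a)) x = c * blinfun_apply (T a) x) \<and>
        (\<forall>a. norm (T a) = norm a))"

definition alt_W_factor ::
  "(complex \<Rightarrow> 'x::real_normed_vector \<Rightarrow> 'x) \<Rightarrow> (complex \<Rightarrow> 'a::banach \<Rightarrow> 'a) \<Rightarrow>
   ('a \<Rightarrow> 'a \<Rightarrow> 'a) \<Rightarrow> ('a \<Rightarrow> 'a) \<Rightarrow> 'a \<Rightarrow> bool" where
  "alt_W_factor smulX smul mul star one \<longleftrightarrow>
     alt_Cstar smul mul star \<and> prime_alg smul mul \<and> is_dual_of smulX smul \<and>
     (\<forall>a. mul one a = a \<and> mul a one = a)"

definition is_projection :: "('a::zero \<Rightarrow> 'a \<Rightarrow> 'a) \<Rightarrow> ('a \<Rightarrow> 'a) \<Rightarrow> 'a \<Rightarrow> bool" where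
  "is_projection mul star p \<longleftrightarrow> p \<noteq> 0 \<and> star p = p \<and> mul p p = p"

definition peirce :: "('a \<Rightarrow> 'a \<Rightarrow> 'a) \<Rightarrow> 'a \<Rightarrow> 'a \<Rightarrow> 'a set" where
  "peirce mul p q = {mul (mul p a) q | a. True}"

end

theory Submission imports Defs begin

text \<open>Let \<open>t\<close> be the preimage of \<open>\<Phi> b\<^sub>1\<^sub>2 + \<Phi> c\<^sub>2\<^sub>1\<close>. As the product
  \<open>a \<circ> b = ab \<plusminus> ba\<^sup>*\<close> of \<open>\<B>\<close> is biadditive, \<open>\<Phi>(t \<circ> s) = \<Phi>(b\<^sub>1\<^sub>2 \<circ> s) + \<Phi>(c\<^sub>2\<^sub>1 \<circ> s)\<close>, and likewise with \<open>t\<close> on the right.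
  For \<open>s = p\<^sub>1\<close> both right-hand sides are \<open>\<Phi>\<close> of a single element (\<open>b\<^sub>1\<^sub>2 \<circ> p\<^sub>1 = 0\<close>), so
  injectivity gives two equations for \<open>t\<close>; cutting them with \<open>p\<^sub>1, p\<^sub>2\<close> yields
  \<open>p\<^sub>2 t p\<^sub>1 = c\<^sub>2\<^sub>1\<close> and \<open>p\<^sub>1 t p\<^sub>1 = 0\<close>. For \<open>ab - ba\<^sup>*\<close> the equations only show that \<open>p\<^sub>1 t p\<^sub>1\<close>
  is self-adjoint; the same argument for the product with \<open>i p\<^sub>1\<close> shows that \<open>i p\<^sub>1 t p\<^sub>1\<close> is
  self-adjoint too, so \<open>p\<^sub>1 t p\<^sub>1 = 0\<close>. Exchanging \<open>p\<^sub>1\<close> and \<open>p\<^sub>2\<close> gives the other two Peirce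
  components, whence \<open>t = b\<^sub>1\<^sub>2 + c\<^sub>2\<^sub>1\<close>.\<close>

definition jordan_star :: "('a::ab_group_add \<Rightarrow> 'a \<Rightarrow> 'a) \<Rightarrow> ('a \<Rightarrow> 'a) \<Rightarrow> 'a \<Rightarrow> 'a \<Rightarrow> 'a" where
  "jordan_star mul star a b = mul a b + mul b (star a)"

definition lie_star :: "('a::ab_group_add \<Rightarrow> 'a \<Rightarrow> 'a) \<Rightarrow> ('a \<Rightarrow> 'a) \<Rightarrow> 'a \<Rightarrow> 'a \<Rightarrow> 'a" where
  "lie_star mul star a b = mul a b - mul b (star a)"

definition preserves_product :: "('a \<Rightarrow> 'b) \<Rightarrow> ('a \<Rightarrow> 'a \<Rightarrow> 'a) \<Rightarrow> ('b \<Rightarrow> 'b \<Rightarrow> 'b) \<Rightarrow> bool" where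
  "preserves_product \<Phi> P Q \<longleftrightarrow> (\<forall>a b. \<Phi> (P a b) = Q (\<Phi> a) (\<Phi> b))"

lemma preserves_product_sum_left:
  assumes "preserves_product \<Phi> P Q" "\<And>u v w. Q (u + v) w = Q u w + Q v w"
    and "\<Phi> t = \<Phi> x + \<Phi> y"
  shows "\<Phi> (P t b) = \<Phi> (P x b) + \<Phi> (P y b)"
  using assms unfolding preserves_product_def by simp

lemma preserves_product_sum_right:
  assumes "preserves_product \<Phi> P Q" "\<And>u v w. Q w (u + v) = Q w u + Q w v"
    and "\<Phi> t = \<Phi> x + \<Phi> y"
  shows "\<Phi> (P b t) = \<Phi> (P b x) + \<Phi> (P b y)"
  using assms unfolding preserves_product_def by simp

lemma preserves_product_zero:
  fixes \<Phi> :: "'a::zero \<Rightarrow> 'b::ab_group_add"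
  assumes pres: "preserves_product \<Phi> P Q" and "surj \<Phi>"
    and Q_add: "\<And>u v w. Q (u + v) w = Q u w + Q v w" and P_zero: "\<And>a. P a 0 = 0"
  shows "\<Phi> 0 = 0"
proof -
  obtain z where z: "\<Phi> z = 0" using \<open>surj \<Phi>\<close> by (metis surjD)
  have "Q 0 w = 0" for w using Q_add[of 0 0 w] by simp
  then show ?thesis using pres P_zero[of z] z unfolding preserves_product_def by metis
qed

locale alt_star_algebra =
  fixes smul :: "complex \<Rightarrow> 'a::ab_group_add \<Rightarrow> 'a" and mul :: "'a \<Rightarrow> 'a \<Rightarrow> 'a"
    and star :: "'a \<Rightarrow> 'a"
  assumes smul_add_right: "smul c (x + y) = smul c x + smul c y"
    and smul_add_left: "smul (c + d) x = smul c x + smul d x"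
    and smul_smul: "smul (c * d) x = smul c (smul d x)"
    and smul_one: "smul 1 x = x"
    and mul_add_left: "mul (x + y) z = mul x z + mul y z"
    and mul_add_right: "mul x (y + z) = mul x y + mul x z"
    and mul_smul_left: "mul (smul c x) y = smul c (mul x y)"
    and mul_smul_right: "mul x (smul c y) = smul c (mul x y)"
    and left_alternative: "mul (mul x x) y = mul x (mul x y)"
    and right_alternative: "mul (mul y x) x = mul y (mul x x)"
    and star_add: "star (x + y) = star x + star y"
    and star_smul: "star (smul c x) = smul (cnj c) (star x)"
    and star_star: "star (star x) = x"
    and star_mul: "star (mul x y) = mul (star y) (star x)"
begin

lemma mul_zero_left [simp]: "mul 0 a = 0"
  using mul_add_left[of 0 0 a] by simp

lemma mul_zero_right [simp]: "mul a 0 = 0"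
  using mul_add_right[of a 0 0] by simp

lemma mul_minus_left: "mul (- a) b = - mul a b"
  using mul_add_left[of a "- a" b] by (simp add: minus_unique)

lemma mul_minus_right: "mul b (- a) = - mul b a"
  using mul_add_right[of b a "- a"] by (simp add: minus_unique)

lemma mul_diff_left: "mul (a - b) c = mul a c - mul b c"
  using mul_add_left[of a "- b" c] by (simp add: mul_minus_left)

lemma mul_diff_right: "mul c (a - b) = mul c a - mul c b"
  using mul_add_right[of c a "- b"] by (simp add: mul_minus_right)

lemma star_zero [simp]: "star 0 = 0"
  using star_add[of 0 0] by simp

lemma star_diff: "star (a - b) = star a - star b"
proof -
  have "star (- b) = - star b"
    using star_add[of b "- b"] by (simp add: minus_unique)
  then show ?thesis using star_add[of a "- b"] by simp
qed

lemma smul_zero_right: "smul c 0 = 0"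
  using smul_add_right[of c 0 0] by simp

lemma smul_zero_left: "smul 0 x = 0"
  using smul_add_left[of 0 0 x] by simp

lemma smul_minus_left: "smul (- c) x = - smul c x"
  using smul_add_left[of c "- c" x] by (simp add: smul_zero_left minus_unique)

lemma smul_diff_left: "smul (c - d) x = smul c x - smul d x"
  using smul_add_left[of "c - d" d x] by (simp add: eq_diff_eq)

lemma smul_eq_zero_imp: "smul c x = 0 \<Longrightarrow> c \<noteq> 0 \<Longrightarrow> x = 0"
  using smul_smul[of "inverse c" c x] by (simp add: smul_one smul_zero_right)

lemma flexible: "mul (mul x y) x = mul x (mul y x)"
proof -
  have "mul (mul (x + y) (x + y)) x = mul (x + y) (mul (x + y) x)"
    by (rule left_alternative)
  then have "mul (mul x x) x + mul (mul y x) x + (mul (mul x y) x + mul (mul y y) x) =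
      mul x (mul x x) + mul y (mul x x) + (mul x (mul y x) + mul y (mul y x))"
    by (simp add: mul_add_left mul_add_right add_ac)
  then show ?thesis
    by (simp only: left_alternative right_alternative add_left_cancel add_right_cancel)
qed

lemma self_adjoint_smul_non_real:
  assumes "star u = u" "star (smul c u) = smul c u" "cnj c \<noteq> c"
  shows "u = 0"
proof -
  have "smul (c - cnj c) u = 0"
    using assms(1,2) by (simp add: star_smul smul_diff_left)
  moreover have "c - cnj c \<noteq> 0" using assms(3) by simp
  ultimately show ?thesis by (rule smul_eq_zero_imp)
qed

lemma peirce_smul:
  assumes "x \<in> peirce mul p q" shows "smul c x \<in> peirce mul p q"
proof -
  obtain a where "x = mul (mul p a) q" using assms unfolding peirce_def by blast
  then have "smul c x = mul (mul p (smul c a)) q" by (simp add: mul_smul_left mul_smul_right)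
  then show ?thesis unfolding peirce_def by blast
qed

lemma jordan_star_add_left:
  "jordan_star mul star (u + v) w = jordan_star mul star u w + jordan_star mul star v w"
  by (simp add: jordan_star_def mul_add_left mul_add_right star_add add_ac)

lemma jordan_star_add_right:
  "jordan_star mul star w (u + v) = jordan_star mul star w u + jordan_star mul star w v"
  by (simp add: jordan_star_def mul_add_left mul_add_right add_ac)

lemma lie_star_add_left:
  "lie_star mul star (u + v) w = lie_star mul star u w + lie_star mul star v w"
  by (simp add: lie_star_def mul_add_left mul_add_right star_add)

lemma lie_star_add_right:
  "lie_star mul star w (u + v) = lie_star mul star w u + lie_star mul star w v"
  by (simp add: lie_star_def mul_add_left mul_add_right)

lemma jordan_star_zero_right: "jordan_star mul star a 0 = 0"
  by (simp add: jordan_star_def)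

lemma lie_star_zero_right: "lie_star mul star a 0 = 0"
  by (simp add: lie_star_def)

end

lemma alt_star_alg_imp_alt_star_algebra:
  "alt_star_alg smul mul star \<Longrightarrow> alt_star_algebra smul mul star"
  unfolding alt_star_alg_def complex_vs_def by unfold_locales simp_all

locale alt_star_projection = alt_star_algebra smul mul star
  for smul :: "complex \<Rightarrow> 'a::ab_group_add \<Rightarrow> 'a" and mul star +
  fixes one :: 'a and f :: 'a
  assumes mul_one_left: "mul one a = a" and mul_one_right: "mul a one = a"
    and star_proj: "star f = f" and proj_idem: "mul f f = f"
begin

lemma star_one: "star one = one"
  using star_mul[of "star one" one] by (simp add: star_star mul_one_left mul_one_right)

lemma proj_mul_proj: "mul f (mul f z) = mul f z"
  using left_alternative[of f z] by (simp add: proj_idem)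

lemma mul_proj_proj: "mul (mul z f) f = mul z f"
  using right_alternative[of z f] by (simp add: proj_idem)

lemma compl_mul: "mul (one - f) w = w - mul f w"
  by (simp add: mul_diff_left mul_one_left)

lemma mul_compl: "mul w (one - f) = w - mul w f"
  by (simp add: mul_diff_right mul_one_right)

lemma proj_mul_corner: "mul f (mul (mul f z) f) = mul (mul f z) f"
  using flexible[of f "mul f z"] by (simp add: proj_mul_proj)

lemma compl_projection: "alt_star_projection smul mul star one (one - f)"
  by unfold_locales (simp_all add: mul_one_left mul_one_right star_diff star_one star_proj
      compl_mul mul_compl proj_idem)

lemma peirce12_proj_left: "x \<in> peirce mul f (one - f) \<Longrightarrow> mul f x = x"
  unfolding peirce_def
  by (auto simp: mul_compl mul_diff_right mul_one_right proj_mul_proj proj_mul_corner)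

lemma peirce12_proj_right: "x \<in> peirce mul f (one - f) \<Longrightarrow> mul x f = 0"
  unfolding peirce_def by (auto simp: mul_compl mul_diff_left mul_proj_proj)

lemma peirce21_proj_left: "y \<in> peirce mul (one - f) f \<Longrightarrow> mul f y = 0"
  unfolding peirce_def
  by (auto simp: compl_mul mul_diff_left mul_diff_right mul_one_left proj_mul_corner
      proj_mul_proj simp flip: flexible)

lemma peirce21_proj_right: "y \<in> peirce mul (one - f) f \<Longrightarrow> mul y f = y"
  unfolding peirce_def by (auto simp: compl_mul mul_diff_left mul_proj_proj)

lemma peirce_decomposition:
  "t = mul f (mul t f) + mul (one - f) (mul t f) + mul f (mul t (one - f))
     + mul (one - f) (mul t (one - f))"
  by (simp add: compl_mul mul_compl)

lemma peirce12_proj_star: "x \<in> peirce mul f (one - f) \<Longrightarrow> mul f (star x) = 0"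
  using star_mul[of x f] by (simp add: peirce12_proj_right star_proj)

lemma peirce21_proj_star: "y \<in> peirce mul (one - f) f \<Longrightarrow> mul f (star y) = star y"
  using star_mul[of y f] by (simp add: peirce21_proj_right star_proj)

lemma jordan_star_proj_lower_corner:
  assumes y: "y \<in> peirce mul (one - f) f"
    and eq: "jordan_star mul star t f = jordan_star mul star y f"
  shows "mul (one - f) (mul t f) = y"
proof -
  have "mul (one - f) (jordan_star mul star t f) = mul (one - f) (jordan_star mul star y f)"
    using eq by simp
  then show ?thesis
    by (simp add: jordan_star_def compl_mul mul_add_right proj_mul_proj
        peirce21_proj_left[OF y] peirce21_proj_right[OF y] peirce21_proj_star[OF y])
qed

lemma jordan_star_proj_fixed:
  assumes "jordan_star mul star f t = t" shows "mul f (mul t f) = 0"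
proof -
  have "mul f (jordan_star mul star f t) = mul f t" using assms by simp
  then show ?thesis by (simp add: jordan_star_def star_proj mul_add_right proj_mul_proj)
qed

lemma lie_star_proj_lower_corner:
  assumes y: "y \<in> peirce mul (one - f) f"
    and eq: "lie_star mul star t f = lie_star mul star y f"
  shows "mul (one - f) (mul t f) = y" and "star (mul f (mul t f)) = mul f (mul t f)"
proof -
  have "mul (one - f) (lie_star mul star t f) = mul (one - f) (lie_star mul star y f)"
    using eq by simp
  then show lower: "mul (one - f) (mul t f) = y"
    by (simp add: lie_star_def compl_mul mul_diff_right proj_mul_proj
        peirce21_proj_left[OF y] peirce21_proj_right[OF y] peirce21_proj_star[OF y])
  have "mul (star y) f = 0"
    using star_mul[of f y] by (simp add: peirce21_proj_left[OF y] star_proj)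
  then have "mul (lie_star mul star t f) f = y"
    using eq by (simp add: lie_star_def mul_diff_left mul_proj_proj peirce21_proj_right[OF y]
        peirce21_proj_star[OF y])
  then have "mul t f - mul (mul f (star t)) f = mul t f - mul f (mul t f)"
    using lower by (simp add: lie_star_def mul_diff_left mul_proj_proj mul_one_left)
  then have "mul f (mul t f) = mul (mul f (star t)) f"
    by simp
  moreover have "star (mul f (mul t f)) = mul (mul f (star t)) f"
    by (simp add: star_mul star_proj)
  ultimately show "star (mul f (mul t f)) = mul f (mul t f)"
    by simp
qed

lemma lie_star_imag_proj: "lie_star mul star (smul \<i> f) t = smul \<i> (mul f t + mul t f)"
  by (simp add: lie_star_def star_smul star_proj mul_smul_left mul_smul_right
      smul_minus_left mul_minus_right smul_add_right)

lemma proj_corner_jordan: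
  "mul f (mul (smul c (mul f t + mul t f)) f) = smul (2 * c) (mul f (mul t f))"
  using smul_add_left[of c c "mul f (mul t f)"]
  by (simp add: mul_smul_left mul_smul_right mul_add_left mul_add_right flexible
      proj_mul_proj mul_proj_proj smul_add_right)

lemma jordan_preserver_corners:
  fixes \<Phi> :: "'a \<Rightarrow> 'b::ab_group_add"
  assumes B: "alt_star_algebra smulB mulB starB"
    and pres: "preserves_product \<Phi> (jordan_star mul star) (jordan_star mulB starB)"
    and "inj \<Phi>" "\<Phi> 0 = 0"
    and x: "x \<in> peirce mul f (one - f)" and y: "y \<in> peirce mul (one - f) f"
    and T: "\<Phi> t = \<Phi> x + \<Phi> y"
  shows "mul (one - f) (mul t f) = y \<and> mul f (mul t f) = 0"
proof -
  interpret B: alt_star_algebra smulB mulB starB by (fact B)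
  have "\<Phi> (jordan_star mul star t f) = \<Phi> (jordan_star mul star x f) + \<Phi> (jordan_star mul star y f)"
    by (rule preserves_product_sum_left[OF pres B.jordan_star_add_left T])
  moreover have "jordan_star mul star x f = 0"
    by (simp add: jordan_star_def peirce12_proj_right[OF x] peirce12_proj_star[OF x])
  ultimately have "jordan_star mul star t f = jordan_star mul star y f"
    using \<open>inj \<Phi>\<close> \<open>\<Phi> 0 = 0\<close> by (simp add: inj_eq)
  then have lower: "mul (one - f) (mul t f) = y"
    by (rule jordan_star_proj_lower_corner[OF y])
  have "\<Phi> (jordan_star mul star f t) = \<Phi> (jordan_star mul star f x) + \<Phi> (jordan_star mul star f y)"
    by (rule preserves_product_sum_right[OF pres B.jordan_star_add_right T])
  moreover have "jordan_star mul star f x = x" "jordan_star mul star f y = y"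
    by (simp_all add: jordan_star_def star_proj peirce12_proj_left[OF x] peirce12_proj_right[OF x]
        peirce21_proj_left[OF y] peirce21_proj_right[OF y])
  ultimately have "jordan_star mul star f t = t"
    using T \<open>inj \<Phi>\<close> by (metis injD)
  then show ?thesis
    using lower jordan_star_proj_fixed by blast
qed

lemma lie_preserver_lower_corner:
  fixes \<Phi> :: "'a \<Rightarrow> 'b::ab_group_add"
  assumes B: "alt_star_algebra smulB mulB starB"
    and pres: "preserves_product \<Phi> (lie_star mul star) (lie_star mulB starB)"
    and "inj \<Phi>" "\<Phi> 0 = 0"
    and x: "x \<in> peirce mul f (one - f)" and y: "y \<in> peirce mul (one - f) f"
    and T: "\<Phi> t = \<Phi> x + \<Phi> y"
  shows "mul (one - f) (mul t f) = y" and "star (mul f (mul t f)) = mul f (mul t f)"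
proof -
  interpret B: alt_star_algebra smulB mulB starB by (fact B)
  have "\<Phi> (lie_star mul star t f) = \<Phi> (lie_star mul star x f) + \<Phi> (lie_star mul star y f)"
    by (rule preserves_product_sum_left[OF pres B.lie_star_add_left T])
  moreover have "lie_star mul star x f = 0"
    by (simp add: lie_star_def peirce12_proj_right[OF x] peirce12_proj_star[OF x])
  ultimately have "lie_star mul star t f = lie_star mul star y f"
    using \<open>inj \<Phi>\<close> \<open>\<Phi> 0 = 0\<close> by (simp add: inj_eq)
  then show "mul (one - f) (mul t f) = y" and "star (mul f (mul t f)) = mul f (mul t f)"
    using lie_star_proj_lower_corner[OF y] by blast+
qed

text \<open>The upper corner is reached through the \<open>*\<close>-Lie product with \<open>\<i> f\<close>, which acts as
  \<open>\<i>\<close> times the Jordan product with \<open>f\<close>.\<close>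
lemma lie_preserver_corners:
  fixes \<Phi> :: "'a \<Rightarrow> 'b::ab_group_add"
  assumes B: "alt_star_algebra smulB mulB starB"
    and pres: "preserves_product \<Phi> (lie_star mul star) (lie_star mulB starB)"
    and "inj \<Phi>" "\<Phi> 0 = 0"
    and x: "x \<in> peirce mul f (one - f)" and y: "y \<in> peirce mul (one - f) f"
    and T: "\<Phi> t = \<Phi> x + \<Phi> y"
  shows "mul (one - f) (mul t f) = y \<and> mul f (mul t f) = 0"
proof -
  interpret B: alt_star_algebra smulB mulB starB by (fact B)
  define s where "s = lie_star mul star (smul \<i> f) t"
  have "\<Phi> s = \<Phi> (lie_star mul star (smul \<i> f) x) + \<Phi> (lie_star mul star (smul \<i> f) y)"
    unfolding s_def by (rule preserves_product_sum_right[OF pres B.lie_star_add_right T])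
  moreover have "lie_star mul star (smul \<i> f) x = smul \<i> x" "lie_star mul star (smul \<i> f) y = smul \<i> y"
    by (simp_all add: lie_star_imag_proj peirce12_proj_left[OF x] peirce12_proj_right[OF x]
        peirce21_proj_left[OF y] peirce21_proj_right[OF y])
  ultimately have "\<Phi> s = \<Phi> (smul \<i> x) + \<Phi> (smul \<i> y)"
    by simp
  then have "star (mul f (mul s f)) = mul f (mul s f)"
    by (rule lie_preserver_lower_corner(2)[OF B pres \<open>inj \<Phi>\<close> \<open>\<Phi> 0 = 0\<close>
          peirce_smul[OF x] peirce_smul[OF y]])
  then have "star (smul (2 * \<i>) (mul f (mul t f))) = smul (2 * \<i>) (mul f (mul t f))"
    by (simp add: s_def lie_star_imag_proj proj_corner_jordan)
  then have "mul f (mul t f) = 0"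
    using lie_preserver_lower_corner(2)[OF B pres \<open>inj \<Phi>\<close> \<open>\<Phi> 0 = 0\<close> x y T]
    by (intro self_adjoint_smul_non_real) (auto simp: complex_eq_iff)
  then show ?thesis
    using lie_preserver_lower_corner(1)[OF B pres \<open>inj \<Phi>\<close> \<open>\<Phi> 0 = 0\<close> x y T] by simp
qed

lemma preserver_peirce_additive:
  fixes \<Phi> :: "'a \<Rightarrow> 'b::ab_group_add"
  assumes B: "alt_star_algebra smulB mulB starB" and "bij \<Phi>"
    and pres: "preserves_product \<Phi> (jordan_star mul star) (jordan_star mulB starB)
      \<or> preserves_product \<Phi> (lie_star mul star) (lie_star mulB starB)"
    and x: "x \<in> peirce mul f (one - f)" and y: "y \<in> peirce mul (one - f) f"
  shows "\<Phi> (x + y) = \<Phi> x + \<Phi> y"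
proof -
  interpret B: alt_star_algebra smulB mulB starB by (fact B)
  have "inj \<Phi>" "surj \<Phi>" using \<open>bij \<Phi>\<close> by (simp_all add: bij_is_inj bij_is_surj)
  have "\<Phi> 0 = 0"
    using pres
  proof
    assume "preserves_product \<Phi> (jordan_star mul star) (jordan_star mulB starB)"
    then show ?thesis
      using preserves_product_zero \<open>surj \<Phi>\<close> B.jordan_star_add_left jordan_star_zero_right
      by metis
  next
    assume "preserves_product \<Phi> (lie_star mul star) (lie_star mulB starB)"
    then show ?thesis
      using preserves_product_zero \<open>surj \<Phi>\<close> B.lie_star_add_left lie_star_zero_right
      by metis
  qed
  have corners: "mul (one - g) (mul t g) = v \<and> mul g (mul t g) = 0"
    if "alt_star_projection smul mul star one g" "u \<in> peirce mul g (one - g)"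
      "v \<in> peirce mul (one - g) g" "\<Phi> t = \<Phi> u + \<Phi> v" for g u v t
    using pres
      alt_star_projection.jordan_preserver_corners[OF that(1) B _ \<open>inj \<Phi>\<close> \<open>\<Phi> 0 = 0\<close> that(2-4)]
      alt_star_projection.lie_preserver_corners[OF that(1) B _ \<open>inj \<Phi>\<close> \<open>\<Phi> 0 = 0\<close> that(2-4)]
    by blast
  obtain t where T: "\<Phi> t = \<Phi> x + \<Phi> y" using \<open>surj \<Phi>\<close> by (metis surjD)
  have "alt_star_projection smul mul star one f" by intro_locales
  from corners[OF this x y T]
  have "mul (one - f) (mul t f) = y \<and> mul f (mul t f) = 0" .
  moreover from corners[OF compl_projection, of y x t]
  have "mul f (mul t (one - f)) = x \<and> mul (one - f) (mul t (one - f)) = 0"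
    using x y T by (simp add: add.commute)
  ultimately have "t = x + y"
    using peirce_decomposition[of t] by (simp add: add.commute)
  then show ?thesis using T by simp
qed

end

theorem claim2p2:
  fixes smulX :: "complex \<Rightarrow> 'x::real_normed_vector \<Rightarrow> 'x"
    and smul :: "complex \<Rightarrow> 'a::banach \<Rightarrow> 'a"
    and mul :: "'a \<Rightarrow> 'a \<Rightarrow> 'a" and star :: "'a \<Rightarrow> 'a" and one :: 'a
    and smulB :: "complex \<Rightarrow> 'b::ab_group_add \<Rightarrow> 'b"
    and mulB :: "'b \<Rightarrow> 'b \<Rightarrow> 'b" and starB :: "'b \<Rightarrow> 'b"
    and \<Phi> :: "'a \<Rightarrow> 'b" and p1 :: 'a
  assumes A: "alt_W_factor smulX smul mul star one"
    and B: "alt_star_alg smulB mulB starB"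
    and bij: "bij \<Phi>"
    and pres: "(\<forall>a b. \<Phi> (mul a b + mul b (star a)) = mulB (\<Phi> a) (\<Phi> b) + mulB (\<Phi> b) (starB (\<Phi> a)))
             \<or> (\<forall>a b. \<Phi> (mul a b - mul b (star a)) = mulB (\<Phi> a) (\<Phi> b) - mulB (\<Phi> b) (starB (\<Phi> a)))"
    and p1: "is_projection mul star p1" and p1ne: "p1 \<noteq> one"
    and b12: "b12 \<in> peirce mul p1 (one - p1)"
    and c21: "c21 \<in> peirce mul (one - p1) p1"
  shows "\<Phi> (b12 + c21) = \<Phi> b12 + \<Phi> c21"
proof -
  have "alt_star_alg smul mul star" and "\<forall>a. mul one a = a \<and> mul a one = a"
    using A unfolding alt_W_factor_def alt_Cstar_def by auto
  moreover have "star p1 = p1" "mul p1 p1 = p1"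
    using p1 unfolding is_projection_def by auto
  ultimately interpret alt_star_projection smul mul star one p1
    by (intro alt_star_projection.intro alt_star_projection_axioms.intro
        alt_star_alg_imp_alt_star_algebra) simp_all
  show ?thesis
    using pres
    by (intro preserver_peirce_additive[OF alt_star_alg_imp_alt_star_algebra[OF B] bij _ b12 c21])
      (simp add: preserves_product_def jordan_star_def lie_star_def)
qed

end
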